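(* Let $F:\mathsf V\to\mathsf W$ be a morphism of quantales and $X=(X,a)$ a $\mathsf V$-category; let $FX=(X,F\circ a)$. Let $\Phi$ be the map from the set of left adjoint $\mathsf V$-modules $E\rightharpoonup X$ to the set of left adjoint $\mathsf W$-modules $E\rightharpoonup FX$ given by $\Phi(\varphi)=F\circ\varphi$. (1) If $FX$ is Cauchy complete and $\Phi$ is injective, then $X$ is Cauchy complete. (2) If $X$ is Cauchy complete and $\Phi$ is surjective, then $FX$ is Cauchy complete.
   Context: A quantale $(\mathsf V,\otimes,k)$ is a complete anti-symmetric lattice with an associative, commutative operation $\otimes$ with neutral element $k$ distributing over arbitrary suprema. A morphism of quantales $F:(\mathsf V,\otimes,k)\to(\mathsf W,\oplus,l)$ is a monotone map preserving all suprema, with $F(u)\oplus F(v)=F(u\otimes v)$ and $F(k)=l$. A $\mathsf V$-category $(X,a)$ is a set with $a:X\times X\to\mathsf V$ such that $k\le a(x,x)$ and $a(x,y)\otimes a(y,z)\le a(x,z)$. A $\mathsf V$-module $\varphi:(X,a)\rightharpoonup(Y,b)$ is a map $X\times Y\to\mathsf V$ with $a(x,x')\otimes\varphi(x',y)\le\varphi(x,y)$ and $\varphi(x,y)\otimes b(y,y')\le\varphi(x,y')$; composition $(\psi\cdot\varphi)(x,z)=\bigvee_y\varphi(x,y)\otimes\psi(y,z)$; pointwise order; $\varphi\dashv\psi$ means $a\le\psi\cdot\varphi$ and $\varphi\cdot\psi\le b$; $\varphi$ is left adjoint if such $\psi$ exists. $E=(\{\star\},k)$ (for $\mathsf W$,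 $(\{\star\},l)$, which equals $FE$). For $x\in X$, $x_*:E\rightharpoonup X$ is $y\mapsto a(x,y)$. $X$ is Cauchy complete if every left adjoint module $E\rightharpoonup X$ equals $x_*$ for some $x\in X$. $F$ applied to a module is post-composition with $F$; it preserves adjunctions. *)

theory Defs
  imports Main
begin

definition quantale :: "('v::complete_lattice \<Rightarrow> 'v \<Rightarrow> 'v) \<Rightarrow> 'v \<Rightarrow> bool" where
  "quantale tens k \<longleftrightarrow>
     (\<forall>u v w. tens (tens u v) w = tens u (tens v w)) \<and>
     (\<forall>u v. tens u v = tens v u) \<and>
     (\<forall>u. tens k u = u \<and> tens u k = u) \<and>
     (\<forall>u A. tens u (Sup A) = Sup (tens u ` A) \<and> tens (Sup A) u = Sup ((\<lambda>v. tens v u) ` A))"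

definition quantale_morphism ::
  "('v::complete_lattice \<Rightarrow> 'v \<Rightarrow> 'v) \<Rightarrow> 'v \<Rightarrow> ('w::complete_lattice \<Rightarrow> 'w \<Rightarrow> 'w) \<Rightarrow> 'w
    \<Rightarrow> ('v \<Rightarrow> 'w) \<Rightarrow> bool" where
  "quantale_morphism tens k tens' l F \<longleftrightarrow>
     quantale tens k \<and> quantale tens' l \<and> mono F \<and>
     (\<forall>A. F (Sup A) = Sup (F ` A)) \<and>
     (\<forall>u v. tens' (F u) (F v) = F (tens u v)) \<and> F k = l"

definition vcat :: "('v::complete_lattice \<Rightarrow> 'v \<Rightarrow> 'v) \<Rightarrow> 'v \<Rightarrow> ('x \<Rightarrow> 'x \<Rightarrow> 'v) \<Rightarrow> bool" where
  "vcat tens k a \<longleftrightarrow> (\<forall>x. k \<le> a x x) \<and> (\<forall>x y z. tens (a x y) (a y z) \<le> a x z)"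

definition vmodule :: "('v::complete_lattice \<Rightarrow> 'v \<Rightarrow> 'v) \<Rightarrow> ('x \<Rightarrow> 'x \<Rightarrow> 'v) \<Rightarrow> ('y \<Rightarrow> 'y \<Rightarrow> 'v)
    \<Rightarrow> ('x \<Rightarrow> 'y \<Rightarrow> 'v) \<Rightarrow> bool" where
  "vmodule tens a b phi \<longleftrightarrow>
     (\<forall>x x' y. tens (a x x') (phi x' y) \<le> phi x y) \<and>
     (\<forall>x y y'. tens (phi x y) (b y y') \<le> phi x y')"

definition mcomp :: "('v::complete_lattice \<Rightarrow> 'v \<Rightarrow> 'v) \<Rightarrow> ('y \<Rightarrow> 'z \<Rightarrow> 'v) \<Rightarrow> ('x \<Rightarrow> 'y \<Rightarrow> 'v)
    \<Rightarrow> ('x \<Rightarrow> 'z \<Rightarrow> 'v)" where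
  "mcomp tens psi phi = (\<lambda>x z. SUP y. tens (phi x y) (psi y z))"

definition madjoint :: "('v::complete_lattice \<Rightarrow> 'v \<Rightarrow> 'v) \<Rightarrow> ('x \<Rightarrow> 'x \<Rightarrow> 'v) \<Rightarrow> ('y \<Rightarrow> 'y \<Rightarrow> 'v)
    \<Rightarrow> ('x \<Rightarrow> 'y \<Rightarrow> 'v) \<Rightarrow> ('y \<Rightarrow> 'x \<Rightarrow> 'v) \<Rightarrow> bool" where
  "madjoint tens a b phi psi \<longleftrightarrow>
     vmodule tens a b phi \<and> vmodule tens b a psi \<and>
     a \<le> mcomp tens psi phi \<and> mcomp tens phi psi \<le> b"

definition left_adjoint :: "('v::complete_lattice \<Rightarrow> 'v \<Rightarrow> 'v) \<Rightarrow> ('x \<Rightarrow> 'x \<Rightarrow> 'v) \<Rightarrow> ('y \<Rightarrow> 'y \<Rightarrow> 'v)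
    \<Rightarrow> ('x \<Rightarrow> 'y \<Rightarrow> 'v) \<Rightarrow> bool" where
  "left_adjoint tens a b phi \<longleftrightarrow> vmodule tens a b phi \<and> (\<exists>psi. madjoint tens a b phi psi)"

definition unitcat :: "'v \<Rightarrow> unit \<Rightarrow> unit \<Rightarrow> 'v" where
  "unitcat k = (\<lambda>_ _. k)"

definition LA :: "('v::complete_lattice \<Rightarrow> 'v \<Rightarrow> 'v) \<Rightarrow> 'v \<Rightarrow> ('x \<Rightarrow> 'x \<Rightarrow> 'v)
    \<Rightarrow> (unit \<Rightarrow> 'x \<Rightarrow> 'v) set" where
  "LA tens k a = {phi. left_adjoint tens (unitcat k) a phi}"

definition lowerstar :: "('x \<Rightarrow> 'x \<Rightarrow> 'v) \<Rightarrow> 'x \<Rightarrow> unit \<Rightarrow> 'x \<Rightarrow> 'v" where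
  "lowerstar a x = (\<lambda>_ y. a x y)"

definition cauchy_complete :: "('v::complete_lattice \<Rightarrow> 'v \<Rightarrow> 'v) \<Rightarrow> 'v \<Rightarrow> ('x \<Rightarrow> 'x \<Rightarrow> 'v) \<Rightarrow> bool" where
  "cauchy_complete tens k a \<longleftrightarrow> (\<forall>phi \<in> LA tens k a. \<exists>x. phi = lowerstar a x)"

definition Fmod :: "('v \<Rightarrow> 'w) \<Rightarrow> ('x \<Rightarrow> 'y \<Rightarrow> 'v) \<Rightarrow> ('x \<Rightarrow> 'y \<Rightarrow> 'w)" where
  "Fmod F phi = (\<lambda>x y. F (phi x y))"

end

theory Submission
  imports Defs
begin

text \<open>Both parts rest on two facts: every representable module \<open>x\<^sub>*\<close> is left adjoint, and
  \<open>F\<close> maps \<open>x\<^sub>*\<close> to \<open>x\<^sub>*\<close> of \<open>FX\<close>. For (1), a left adjoint \<open>\<phi>\<close> has \<open>F\<phi> = x\<^sub>* = F(x\<^sub>*)\<close>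
  for some \<open>x\<close>, and injectivity gives \<open>\<phi> = x\<^sub>*\<close>; for (2), a left adjoint \<open>\<psi>\<close> is \<open>F\<phi>\<close> by
  surjectivity, and \<open>\<phi> = x\<^sub>*\<close> gives \<open>\<psi> = x\<^sub>*\<close>.\<close>

lemma quantale_tens_left_mono:
  assumes "quantale tens k" and "u \<le> u'"
  shows "tens u v \<le> tens u' v"
proof -
  have "tens (Sup {u, u'}) v = Sup ((\<lambda>w. tens w v) ` {u, u'})"
    using assms(1) unfolding quantale_def by blast
  moreover have "Sup {u, u'} = u'" using assms(2) by (simp add: sup_absorb2)
  ultimately have "tens u' v = sup (tens u v) (tens u' v)" by simp
  thus ?thesis by (metis sup.cobounded1)
qed

lemma quantale_tens_mono:
  assumes q: "quantale tens k" and "u \<le> u'" "v \<le> v'"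
  shows "tens u v \<le> tens u' v'"
proof -
  have comm: "\<And>x y. tens x y = tens y x" using q unfolding quantale_def by blast
  have "tens u v \<le> tens u' v" by (rule quantale_tens_left_mono[OF q assms(2)])
  also have "\<dots> = tens v u'" by (rule comm)
  also have "\<dots> \<le> tens v' u'" by (rule quantale_tens_left_mono[OF q assms(3)])
  also have "\<dots> = tens u' v'" by (rule comm)
  finally show ?thesis .
qed

text \<open>The right adjoint of \<open>x\<^sub>*\<close> is \<open>x\<^sup>* = (\<lambda>y _. a y x)\<close>.\<close>

lemma lowerstar_in_LA:
  assumes q: "quantale tens k" and X: "vcat tens k a"
  shows "lowerstar a x \<in> LA tens k a"
proof -
  have unit: "\<And>u. tens k u = u" "\<And>u. tens u k = u" using q unfolding quantale_def by auto
  have refl: "\<And>x. k \<le> a x x" and trans: "\<And>x y z. tens (a x y) (a y z) \<le> a x z"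
    using X unfolding vcat_def by auto
  define upperstar where "upperstar = (\<lambda>y (_::unit). a y x)"
  have "vmodule tens (unitcat k) a (lowerstar a x)"
    unfolding vmodule_def unitcat_def lowerstar_def using unit trans by auto
  moreover have "vmodule tens a (unitcat k) upperstar"
    unfolding vmodule_def unitcat_def upperstar_def using unit trans by auto
  moreover have "unitcat k \<le> mcomp tens upperstar (lowerstar a x)"
  proof (intro le_funI)
    fix s t :: unit
    have "k = tens k k" using unit by simp
    also have "\<dots> \<le> tens (a x x) (a x x)" by (rule quantale_tens_mono[OF q refl refl])
    also have "\<dots> \<le> (SUP y. tens (a x y) (a y x))" by (rule SUP_upper) simp
    finally show "unitcat k s t \<le> mcomp tens upperstar (lowerstar a x) s t"
      unfolding unitcat_def mcomp_def upperstar_def lowerstar_def by simp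
  qed
  moreover have "mcomp tens (lowerstar a x) upperstar \<le> a"
    unfolding mcomp_def upperstar_def lowerstar_def
    by (intro le_funI SUP_least) (rule trans)
  ultimately show ?thesis unfolding LA_def left_adjoint_def madjoint_def by blast
qed

lemma Fmod_lowerstar: "Fmod F (lowerstar a x) = lowerstar (Fmod F a) x"
  unfolding Fmod_def lowerstar_def by simp

lemma Fmod_unitcat: "F k = l \<Longrightarrow> Fmod F (unitcat k) = unitcat l"
  unfolding Fmod_def unitcat_def by simp

lemma Fmod_mono:
  "mono F \<Longrightarrow> phi \<le> psi \<Longrightarrow> Fmod F phi \<le> Fmod F psi"
  unfolding Fmod_def le_fun_def by (auto intro: monoD)

lemma Fmod_vmodule:
  assumes "quantale_morphism tensV k tensW l F" and "vmodule tensV a b phi"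
  shows "vmodule tensW (Fmod F a) (Fmod F b) (Fmod F phi)"
proof -
  have "mono F" and "\<And>u v. tensW (F u) (F v) = F (tensV u v)"
    using assms(1) unfolding quantale_morphism_def by auto
  then show ?thesis
    using assms(2) unfolding vmodule_def Fmod_def by (auto intro: monoD)
qed

lemma Fmod_mcomp:
  assumes "quantale_morphism tensV k tensW l F"
  shows "mcomp tensW (Fmod F psi) (Fmod F phi) = Fmod F (mcomp tensV psi phi)"
proof -
  have "\<And>A. F (Sup A) = Sup (F ` A)" and "\<And>u v. tensW (F u) (F v) = F (tensV u v)"
    using assms unfolding quantale_morphism_def by auto
  then show ?thesis unfolding mcomp_def Fmod_def by (simp add: image_image)
qed

lemma Fmod_madjoint:
  assumes F: "quantale_morphism tensV k tensW l F" and adj: "madjoint tensV a b phi psi"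
  shows "madjoint tensW (Fmod F a) (Fmod F b) (Fmod F phi) (Fmod F psi)"
proof -
  have mono: "mono F" using F unfolding quantale_morphism_def by blast
  have "Fmod F a \<le> Fmod F (mcomp tensV psi phi)" "Fmod F (mcomp tensV phi psi) \<le> Fmod F b"
    using adj unfolding madjoint_def by (auto intro: Fmod_mono[OF mono])
  moreover have "vmodule tensW (Fmod F a) (Fmod F b) (Fmod F phi)"
    "vmodule tensW (Fmod F b) (Fmod F a) (Fmod F psi)"
    using adj unfolding madjoint_def by (auto intro: Fmod_vmodule[OF F])
  ultimately show ?thesis unfolding madjoint_def Fmod_mcomp[OF F] by blast
qed

lemma Fmod_LA:
  assumes F: "quantale_morphism tensV k tensW l F" and phi: "phi \<in> LA tensV k a"
  shows "Fmod F phi \<in> LA tensW l (Fmod F a)"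
proof -
  have E: "Fmod F (unitcat k) = unitcat l"
    using F unfolding quantale_morphism_def by (blast intro: Fmod_unitcat)
  obtain psi where "madjoint tensV (unitcat k) a phi psi"
    using phi unfolding LA_def left_adjoint_def by blast
  then have "madjoint tensW (unitcat l) (Fmod F a) (Fmod F phi) (Fmod F psi)"
    using Fmod_madjoint[OF F] E by metis
  then show ?thesis unfolding LA_def left_adjoint_def madjoint_def by blast
qed

lemma cauchy_complete_if_Fmod_inj:
  assumes F: "quantale_morphism tensV k tensW l F" and X: "vcat tensV k a"
    and FX: "cauchy_complete tensW l (Fmod F a)" and inj: "inj_on (Fmod F) (LA tensV k a)"
  shows "cauchy_complete tensV k a"
  unfolding cauchy_complete_def
proof
  fix phi assume phi: "phi \<in> LA tensV k a"
  obtain x where "Fmod F phi = lowerstar (Fmod F a) x"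
    using FX Fmod_LA[OF F phi] unfolding cauchy_complete_def by blast
  hence "Fmod F phi = Fmod F (lowerstar a x)" by (simp add: Fmod_lowerstar)
  moreover have "quantale tensV k" using F unfolding quantale_morphism_def by blast
  then have "lowerstar a x \<in> LA tensV k a" using X by (rule lowerstar_in_LA)
  ultimately have "phi = lowerstar a x" using inj phi by (blast dest: inj_onD)
  thus "\<exists>x. phi = lowerstar a x" ..
qed

lemma cauchy_complete_Fmod_if_surj:
  assumes X: "cauchy_complete tensV k a"
    and surj: "Fmod F ` LA tensV k a = LA tensW l (Fmod F a)"
  shows "cauchy_complete tensW l (Fmod F a)"
  unfolding cauchy_complete_def
proof
  fix psi assume "psi \<in> LA tensW l (Fmod F a)"
  then obtain phi where phi: "phi \<in> LA tensV k a" and "psi = Fmod F phi"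
    using surj by blast
  moreover obtain x where "phi = lowerstar a x"
    using X phi unfolding cauchy_complete_def by blast
  ultimately show "\<exists>x. psi = lowerstar (Fmod F a) x" by (auto simp: Fmod_lowerstar)
qed

theorem proposition3p2:
  fixes tensV :: "'v::complete_lattice \<Rightarrow> 'v \<Rightarrow> 'v" and k :: 'v
    and tensW :: "'w::complete_lattice \<Rightarrow> 'w \<Rightarrow> 'w" and l :: 'w
    and F :: "'v \<Rightarrow> 'w" and a :: "'x \<Rightarrow> 'x \<Rightarrow> 'v"
  assumes "quantale_morphism tensV k tensW l F"
    and "vcat tensV k a"
  shows "(cauchy_complete tensW l (Fmod F a) \<and> inj_on (Fmod F) (LA tensV k a)
            \<longrightarrow> cauchy_complete tensV k a)
       \<and> (cauchy_complete tensV k a \<and> Fmod F ` LA tensV k a = LA tensW l (Fmod F a)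
            \<longrightarrow> cauchy_complete tensW l (Fmod F a))"
proof (intro conjI impI)
  show "cauchy_complete tensV k a"
    if "cauchy_complete tensW l (Fmod F a) \<and> inj_on (Fmod F) (LA tensV k a)"
    using that by (elim conjE) (rule cauchy_complete_if_Fmod_inj[OF assms])
  show "cauchy_complete tensW l (Fmod F a)"
    if "cauchy_complete tensV k a \<and> Fmod F ` LA tensV k a = LA tensW l (Fmod F a)"
    using that by (elim conjE) (rule cauchy_complete_Fmod_if_surj)
qed

end
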